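(* For every finite item set $M$ and every additive valuation $v$ on $M$ with nonnegative item values, $\mathrm{RMMS}(M,v,2)=\mathrm{MMS}(M,v,2)$.
   Context: A valuation $v:2^M\to\mathbb{R}_{\ge0}$ is additive if $v(S)=\sum_{e\in S}v(\{e\})$ for all $S\subseteq M$. $\mathrm{MMS}(M,v,n)$ is the maximum, over all partitions $P_1,\dots,P_n$ of $M$ into $n$ (possibly empty) parts, of $\min_j v(P_j)$. Residual maximin share: $\mathrm{RMMS}(M,v,n)$ is the largest real $t$ with the following property: for every $0\le k<n$ and every $k$ pairwise disjoint bundles $B_1,\dots,B_k\subseteq M$ with $v(B_j)<t$ for all $j$, the set $M\setminus(B_1\cup\dots\cup B_k)$ can be partitioned into $n-k$ bundles each of value (under $v$) at least $t$. *)

theory Defs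
  imports Complex_Main "HOL-Library.Disjoint_Sets"
begin

definition is_partition :: "'a set \<Rightarrow> nat \<Rightarrow> (nat \<Rightarrow> 'a set) \<Rightarrow> bool" where
  "is_partition M n P \<longleftrightarrow>
     disjoint_family_on P {..<n} \<and> (\<Union>j<n. P j) = M"

definition additive_valuation :: "'a set \<Rightarrow> ('a set \<Rightarrow> real) \<Rightarrow> bool" where
  "additive_valuation M v \<longleftrightarrow>
     (\<forall>e\<in>M. v {e} \<ge> 0) \<and> (\<forall>S. S \<subseteq> M \<longrightarrow> v S = (\<Sum>e\<in>S. v {e}))"

definition MMS :: "'a set \<Rightarrow> ('a set \<Rightarrow> real) \<Rightarrow> nat \<Rightarrow> real" where
  "MMS M v n = (GREATEST t. \<exists>P. is_partition M n P \<and> t = Min {v (P j) | j. j < n})"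

definition rmms_prop :: "'a set \<Rightarrow> ('a set \<Rightarrow> real) \<Rightarrow> nat \<Rightarrow> real \<Rightarrow> bool" where
  "rmms_prop M v n t \<longleftrightarrow>
     (\<forall>k<n. \<forall>B :: nat \<Rightarrow> 'a set.
        (disjoint_family_on B {..<k} \<and> (\<forall>j<k. B j \<subseteq> M \<and> v (B j) < t)) \<longrightarrow>
        (\<exists>P. is_partition (M - (\<Union>j<k. B j)) (n - k) P \<and> (\<forall>j<n - k. v (P j) \<ge> t)))"

definition RMMS :: "'a set \<Rightarrow> ('a set \<Rightarrow> real) \<Rightarrow> nat \<Rightarrow> real" where
  "RMMS M v n = (GREATEST t. rmms_prop M v n t)"

end

theory Submission
  imports Defs
begin

text \<open>
  An optimal two-part partition \<open>Q\<close> gives \<open>2 * MMS \<le> v M\<close>. Hence, after a single bundle of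
  value below \<open>MMS\<close> has been removed, the remaining items are still worth at least
  \<open>MMS\<close> by additivity, and with no bundle removed \<open>Q\<close> itself works; so \<open>MMS\<close> has the residual property.
  Conversely, any threshold with the residual property is, taking no bundle away, a lower
  bound for both parts of some partition of \<open>M\<close>, so it cannot exceed \<open>MMS\<close>.
\<close>

lemma is_partition_two_iff:
  "is_partition M 2 P \<longleftrightarrow> P 0 \<union> P 1 = M \<and> P 0 \<inter> P 1 = {}"
proof -
  have "{..<2::nat} = {0, 1}" by auto
  then show ?thesis
    unfolding is_partition_def disjoint_family_on_def by auto
qed

lemma is_partition_one: "is_partition A 1 (\<lambda>_. A)"
  unfolding is_partition_def disjoint_family_on_def by auto

lemma is_partition_subset:
  assumes "is_partition M n P" "j < n"
  shows "P j \<subseteq> M"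
  using assms unfolding is_partition_def by auto

lemma is_partition_single_bundle: "n > 0 \<Longrightarrow> is_partition M n (\<lambda>j. if j = 0 then M else {})"
  unfolding is_partition_def disjoint_family_on_def by auto

lemma Min_values_two: "Min {v (P j) | j. j < (2::nat)} = min (v (P 0)) (v (P 1))"
proof -
  have "{v (P j) | j. j < (2::nat)} = {v (P 0), v (P 1)}"
    by (auto simp: less_2_cases_iff)
  then show ?thesis by simp
qed

lemma additive_valuation_diff:
  assumes "finite M" "additive_valuation M v" "A \<subseteq> M"
  shows "v M = v A + v (M - A)"
proof -
  have sum: "\<And>S. S \<subseteq> M \<Longrightarrow> v S = (\<Sum>e\<in>S. v {e})"
    using assms(2) unfolding additive_valuation_def by blast
  have "v M = (\<Sum>e\<in>M. v {e})" by (rule sum) simp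
  also have "\<dots> = (\<Sum>e\<in>A. v {e}) + (\<Sum>e\<in>M - A. v {e})"
    using assms(1,3) by (metis sum.subset_diff add.commute)
  also have "\<dots> = v A + v (M - A)"
    using sum[of A] sum[of "M - A"] assms(3) by auto
  finally show ?thesis .
qed

lemma finite_partition_values:
  assumes "finite M" "n > 0"
  shows "finite {t. \<exists>P. is_partition M n P \<and> t = Min {v (P j) | j. j < n}}"
proof (rule finite_subset)
  show "finite (v ` Pow M)" using assms(1) by simp
  show "{t. \<exists>P. is_partition M n P \<and> t = Min {v (P j) | j. j < n}} \<subseteq> v ` Pow M"
  proof safe
    fix P assume P: "is_partition M n P"
    have "finite {v (P j) | j. j < n}" "{v (P j) | j. j < n} \<noteq> {}"
      using assms(2) by auto
    then have "Min {v (P j) | j. j < n} \<in> {v (P j) | j. j < n}" by (rule Min_in)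
    then show "Min {v (P j) | j. j < n} \<in> v ` Pow M"
      using is_partition_subset[OF P] by blast
  qed
qed

lemma
  assumes "finite M" "n > 0"
  shows MMS_attained: "\<exists>P. is_partition M n P \<and> MMS M v n = Min {v (P j) | j. j < n}"
    and Min_le_MMS: "is_partition M n P \<Longrightarrow> Min {v (P j) | j. j < n} \<le> MMS M v n"
proof -
  let ?S = "{t. \<exists>P. is_partition M n P \<and> t = Min {v (P j) | j. j < n}}"
  have fin: "finite ?S" by (rule finite_partition_values[OF assms])
  have "?S \<noteq> {}"
    using is_partition_single_bundle[OF assms(2), of M] by (intro ex_in_conv[THEN iffD1]; blast)
  have MMS_eq: "MMS M v n = Max ?S"
    unfolding MMS_def
  proof (rule Greatest_equality)
    have "Max ?S \<in> ?S" by (rule Max_in[OF fin \<open>?S \<noteq> {}\<close>])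
    then show "\<exists>P. is_partition M n P \<and> Max ?S = Min {v (P j) | j. j < n}"
      by (simp only: mem_Collect_eq)
    show "t \<le> Max ?S" if "\<exists>P. is_partition M n P \<and> t = Min {v (P j) | j. j < n}" for t
      using that by (intro Max_ge[OF fin] CollectI)
  qed
  show "\<exists>P. is_partition M n P \<and> MMS M v n = Min {v (P j) | j. j < n}"
    using Max_in[OF fin \<open>?S \<noteq> {}\<close>] unfolding MMS_eq by (simp only: mem_Collect_eq)
  show "Min {v (P j) | j. j < n} \<le> MMS M v n" if "is_partition M n P"
    unfolding MMS_eq using that by (intro Max_ge[OF fin] CollectI) blast
qed

lemma two_mult_MMS_two_le:
  assumes "finite M" "additive_valuation M v"
  shows "2 * MMS M v 2 \<le> v M"
proof -
  obtain Q where Q: "is_partition M 2 Q" "MMS M v 2 = min (v (Q 0)) (v (Q 1))"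
    using MMS_attained[OF assms(1), of 2 v] by (auto simp: Min_values_two)
  then have "Q 1 = M - Q 0" "Q 0 \<subseteq> M" by (auto simp: is_partition_two_iff)
  then have "v M = v (Q 0) + v (Q 1)" using additive_valuation_diff[OF assms] by simp
  with Q(2) show ?thesis by linarith
qed

lemma rmms_prop_partition:
  assumes "rmms_prop M v n t" "n > 0"
  shows "\<exists>P. is_partition M n P \<and> (\<forall>j<n. t \<le> v (P j))"
proof -
  have "\<exists>P. is_partition (M - (\<Union>j<0::nat. {})) (n - 0) P \<and> (\<forall>j<n - 0. t \<le> v (P j))"
    by (rule assms(1)[unfolded rmms_prop_def, rule_format])
      (simp_all add: assms(2) disjoint_family_on_def)
  then show ?thesis by simp
qed

lemma rmms_prop_le_MMS:
  assumes "finite M" "n > 0" "rmms_prop M v n t"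
  shows "t \<le> MMS M v n"
proof -
  obtain P where P: "is_partition M n P" "\<forall>j<n. t \<le> v (P j)"
    using rmms_prop_partition[OF assms(3,2)] by blast
  have "t \<le> Min {v (P j) | j. j < n}"
    using P(2) assms(2) by (subst Min_ge_iff) auto
  also have "\<dots> \<le> MMS M v n" by (rule Min_le_MMS[OF assms(1,2) P(1)])
  finally show ?thesis .
qed

lemma RMMS_eq_MMS_if_rmms_prop:
  assumes "finite M" "n > 0" "rmms_prop M v n (MMS M v n)"
  shows "RMMS M v n = MMS M v n"
  unfolding RMMS_def using assms rmms_prop_le_MMS by (intro Greatest_equality) auto

lemma rmms_prop_MMS_two:
  assumes "finite M" "additive_valuation M v"
  shows "rmms_prop M v 2 (MMS M v 2)"
  unfolding rmms_prop_def
proof (intro allI impI)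
  fix k :: nat and B :: "nat \<Rightarrow> 'a set"
  assume "k < 2" and B: "disjoint_family_on B {..<k} \<and> (\<forall>j<k. B j \<subseteq> M \<and> v (B j) < MMS M v 2)"
  show "\<exists>P. is_partition (M - (\<Union>j<k. B j)) (2 - k) P \<and> (\<forall>j<2 - k. MMS M v 2 \<le> v (P j))"
  proof (cases "k = 0")
    case True
    obtain Q where "is_partition M 2 Q" "MMS M v 2 = min (v (Q 0)) (v (Q 1))"
      using MMS_attained[OF assms(1), of 2 v] by (auto simp: Min_values_two)
    with True show ?thesis by (intro exI[of _ Q]) (auto simp: less_2_cases_iff)
  next
    case False
    with \<open>k < 2\<close> have "k = 1" by simp
    with B have B0: "B 0 \<subseteq> M" "v (B 0) < MMS M v 2" by auto
    have "MMS M v 2 \<le> v (M - B 0)"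
      using additive_valuation_diff[OF assms B0(1)] B0(2) two_mult_MMS_two_le[OF assms] by linarith
    moreover have "(\<Union>j<k. B j) = B 0" using \<open>k = 1\<close> by (simp add: lessThan_Suc)
    ultimately show ?thesis
      using \<open>k = 1\<close> is_partition_one[of "M - B 0"] by (intro exI[of _ "\<lambda>_. M - B 0"]) auto
  qed
qed

theorem mainTheorem10:
  fixes M :: "'a set" and v :: "'a set \<Rightarrow> real"
  assumes "finite M" and "additive_valuation M v"
  shows "RMMS M v 2 = MMS M v 2"
  using RMMS_eq_MMS_if_rmms_prop[OF assms(1) _ rmms_prop_MMS_two[OF assms]] by simp

end
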